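(* Let $\mathcal{X}=\{\boldsymbol{x}_j\}_{j=1}^{N}$ be a finite dataset with ground-truth partition $\mathcal{S}^*=\{\mathcal{S}_k^*\}_{k=1}^K$, let $\omega>0$, and let $\mathcal{C}$ be the set of all pairwise constraints derived from $\mathcal{S}^*$, i.e. for every pair $j\neq j'$ it contains $(j,j',y)$ with $y=1$ if $\boldsymbol{x}_j,\boldsymbol{x}_{j'}$ lie in the same cluster and $y=0$ otherwise. Suppose $\mathcal{Z}^*=\{\boldsymbol{z}_j^*\}_{j=1}^N\subset\mathbb{R}^D\setminus\{\mathbf{0}\}$ satisfies $\mathcal{L}_{\mathrm{ang}}(\mathcal{Z}^*;\mathcal{C},\omega)=0$. Then for any $\boldsymbol{x}_j\in\mathcal{S}_k^*$ and $\boldsymbol{x}_{j'}\in\mathcal{S}_{k'}^*$: $\theta_{\boldsymbol{z}_j^*,\boldsymbol{z}_{j'}^*}=0$ if $k=k'$, and $\theta_{\boldsymbol{z}_j^*,\boldsymbol{z}_{j'}^*}\ge \pi/\omega$ if $k\neq k'$.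
   Context: For nonzero $\boldsymbol{u},\boldsymbol{v}\in\mathbb{R}^D$, $\theta_{\boldsymbol{u},\boldsymbol{v}}=\arccos\big(\langle\boldsymbol{u},\boldsymbol{v}\rangle/(\|\boldsymbol{u}\|\|\boldsymbol{v}\|)\big)\in[0,\pi]$. Given constraints $\mathcal{C}=\{(a_i,b_i,y_i)\}_{i=1}^{|\mathcal{C}|}$ with $y_i\in\{0,1\}$, embeddings $\boldsymbol{z}_j$ and a factor $\omega>0$, the SpherePair loss is $\mathcal{L}_{\mathrm{ang}}=-\frac{1}{|\mathcal{C}|}\sum_{i}\big(y_i\log \mathrm{Sim}(a_i,b_i)+(1-y_i)\log(1-\mathrm{Sim}(a_i,b_i))\big)$, where $\mathrm{Sim}(a_i,b_i)=\tfrac12(\cos\theta_{\boldsymbol{z}_{a_i},\boldsymbol{z}_{b_i}}+1)$ if $y_i=1$ and $\mathrm{Sim}(a_i,b_i)=\tfrac12(\cos(\min(\omega\theta_{\boldsymbol{z}_{a_i},\boldsymbol{z}_{b_i}},\pi))+1)$ if $y_i=0$ (with the convention $\log 0=-\infty$). *)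

theory Defs
  imports "HOL-Analysis.Analysis" "HOL-Library.Extended_Real"
begin

definition ang :: "'a::euclidean_space \<Rightarrow> 'a \<Rightarrow> real" where
  "ang u v = arccos (inner u v / (norm u * norm v))"

definition eln :: "real \<Rightarrow> ereal" where
  "eln x = (if x = 0 then -\<infinity> else ereal (ln x))"

definition sim :: "real \<Rightarrow> 'a::euclidean_space \<Rightarrow> 'a \<Rightarrow> nat \<Rightarrow> real" where
  "sim \<omega> u v y = (if y = 1 then (cos (ang u v) + 1) / 2
                  else (cos (min (\<omega> * ang u v) pi) + 1) / 2)"

definition L_ang :: "(nat \<Rightarrow> 'a::euclidean_space) \<Rightarrow> (nat \<times> nat \<times> nat) set \<Rightarrow> real \<Rightarrow> ereal" where
  "L_ang z C \<omega> = - (ereal (1 / real (card C)) *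
      (\<Sum>(a, b, y)\<in>C. ereal (real y) * eln (sim \<omega> (z a) (z b) y)
                     + ereal (1 - real y) * eln (1 - sim \<omega> (z a) (z b) y)))"

definition all_constraints :: "nat \<Rightarrow> (nat \<Rightarrow> nat set) \<Rightarrow> nat \<Rightarrow> (nat \<times> nat \<times> nat) set" where
  "all_constraints N S K = {(j, j', y) | j j' y. j < N \<and> j' < N \<and> j \<noteq> j' \<and>
      y = (if (\<exists>k\<in>{1..K}. j \<in> S k \<and> j' \<in> S k) then 1 else 0)}"

definition is_partition :: "nat \<Rightarrow> (nat \<Rightarrow> nat set) \<Rightarrow> nat \<Rightarrow> bool" where
  "is_partition N S K \<longleftrightarrow> (\<Union>k\<in>{1..K}. S k) = {0..<N}
     \<and> (\<forall>k\<in>{1..K}. S k \<noteq> {})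
     \<and> (\<forall>k\<in>{1..K}. \<forall>k'\<in>{1..K}. k \<noteq> k' \<longrightarrow> S k \<inter> S k' = {})"

end

theory Submission
  imports Defs
begin

text \<open>
  Every summand of the loss is a product of a label in \<open>{0, 1}\<close> with the logarithm of a
  number in \<open>[0, 1]\<close>, hence nonpositive. Zero loss therefore forces every summand to vanish:
  a must-link pair has \<open>Sim = 1\<close>, i.e. \<open>cos \<theta> = 1\<close> and \<open>\<theta> = 0\<close>, and a cannot-link pair has
  \<open>Sim = 0\<close>, i.e. \<open>cos (min (\<omega> \<theta>) \<pi>) = -1\<close>, which on \<open>[0, \<pi>]\<close> means \<open>\<omega> \<theta> \<ge> \<pi>\<close>.
  Pairs \<open>j = j'\<close> carry no constraint, and there \<open>\<theta> = 0\<close> holds because \<open>z j \<noteq> 0\<close>.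
\<close>

lemma sum_nonpos_eq_0_iff:
  fixes f :: "'b \<Rightarrow> 'a::ordered_comm_monoid_add"
  shows "finite A \<Longrightarrow> (\<And>x. x \<in> A \<Longrightarrow> f x \<le> 0) \<Longrightarrow> sum f A = 0 \<longleftrightarrow> (\<forall>x\<in>A. f x = 0)"
  by (induct set: finite) (simp_all add: add_nonpos_eq_0_iff sum_nonpos)

lemma eln_nonpos: "0 \<le> x \<Longrightarrow> x \<le> 1 \<Longrightarrow> eln x \<le> 0"
  by (simp add: eln_def)

lemma eln_eq_0_iff: "0 \<le> x \<Longrightarrow> eln x = 0 \<longleftrightarrow> x = 1"
  by (auto simp: eln_def)

lemma abs_inner_div_norms_le_1: "\<bar>inner u v / (norm u * norm v)\<bar> \<le> 1"
proof (cases "u = 0 \<or> v = 0")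
  case False
  then have "norm u * norm v > 0" by simp
  then show ?thesis
    using Cauchy_Schwarz_ineq2[of u v] by (simp add: abs_mult)
qed auto

lemma ang_bounds: "0 \<le> ang u v" "ang u v \<le> pi"
  using abs_inner_div_norms_le_1[of u v] unfolding ang_def abs_le_iff
  by (simp_all add: arccos_lbound arccos_ubound)

lemma ang_self: "u \<noteq> 0 \<Longrightarrow> ang u u = 0"
  by (simp add: ang_def power2_norm_eq_inner[symmetric] power2_eq_square)

lemma sim_bounds: "0 \<le> sim \<omega> u v y" "sim \<omega> u v y \<le> 1"
proof -
  have "0 \<le> (cos t + 1) / 2 \<and> (cos t + 1) / 2 \<le> 1" for t :: real
    using cos_ge_minus_one[of t] cos_le_one[of t]
    by (simp add: field_simps del: cos_ge_minus_one cos_le_one)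
  then show "0 \<le> sim \<omega> u v y" "sim \<omega> u v y \<le> 1"
    unfolding sim_def by simp_all
qed

lemma sim_1_eq_1_imp_ang_eq_0: "sim \<omega> u v 1 = 1 \<Longrightarrow> ang u v = 0"
  using cos_inj_pi[of "ang u v" 0] ang_bounds[of u v] by (simp add: sim_def)

lemma sim_0_eq_0_imp_ang_ge:
  assumes "\<omega> > 0" and "sim \<omega> u v 0 = 0"
  shows "pi / \<omega> \<le> ang u v"
proof -
  let ?t = "min (\<omega> * ang u v) pi"
  have "cos ?t = cos pi" using assms(2) by (simp add: sim_def)
  moreover have "0 \<le> ?t" using assms(1) ang_bounds[of u v] by simp
  ultimately have "?t = pi" using cos_inj_pi[of ?t pi] by simp
  then have "pi \<le> \<omega> * ang u v" by (metis min.absorb_iff2)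
  then show ?thesis using assms(1) by (simp add: divide_le_eq mult.commute)
qed

lemma L_ang_eq_0_imp_sim_eq_label:
  assumes fin: "finite C" and labels: "\<forall>(a, b, y)\<in>C. y \<le> 1"
    and loss: "L_ang z C \<omega> = 0" and mem: "(a, b, y) \<in> C"
  shows "sim \<omega> (z a) (z b) y = real y"
proof -
  define summand where "summand = (\<lambda>(a, b, y). ereal (real y) * eln (sim \<omega> (z a) (z b) y)
      + ereal (1 - real y) * eln (1 - sim \<omega> (z a) (z b) y))"
  have summand_nonpos: "summand c \<le> 0" if "c \<in> C" for c
  proof -
    obtain a b y where c: "c = (a, b, y)" by (cases c)
    moreover have "y = 0 \<or> y = 1" using that labels c by auto
    ultimately show ?thesis
      using sim_bounds[of \<omega> "z a" "z b" y] by (auto simp: summand_def zero_ereal_def[symmetric] eln_nonpos)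
  qed
  have "card C > 0" using fin mem by (auto simp: card_gt_0_iff)
  then have "sum summand C = 0" using loss by (simp add: L_ang_def summand_def)
  then have "summand (a, b, y) = 0"
    using sum_nonpos_eq_0_iff[of C summand] fin summand_nonpos mem by blast
  moreover have "y = 0 \<or> y = 1" using labels mem by auto
  ultimately show ?thesis
    using sim_bounds[of \<omega> "z a" "z b" y] eln_eq_0_iff
    by (auto simp: summand_def zero_ereal_def[symmetric])
qed

lemma is_partition_block_unique:
  "is_partition N S K \<Longrightarrow> k \<in> {1..K} \<Longrightarrow> k' \<in> {1..K} \<Longrightarrow> j \<in> S k \<Longrightarrow> j \<in> S k' \<Longrightarrow> k = k'"
  unfolding is_partition_def by blast

lemma is_partition_block_subset: "is_partition N S K \<Longrightarrow> k \<in> {1..K} \<Longrightarrow> S k \<subseteq> {0..<N}"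
  unfolding is_partition_def by blast

lemma finite_all_constraints: "finite (all_constraints N S K)"
  by (rule finite_subset[of _ "{0..<N} \<times> {0..<N} \<times> {0, 1}"]) (auto simp: all_constraints_def)

lemma all_constraints_label_le_1: "\<forall>(a, b, y)\<in>all_constraints N S K. y \<le> 1"
  by (auto simp: all_constraints_def)

lemma all_constraints_memI:
  assumes "is_partition N S K" "k \<in> {1..K}" "k' \<in> {1..K}" "j \<in> S k" "j' \<in> S k'" "j \<noteq> j'"
  shows "(j, j', if k = k' then 1 else 0) \<in> all_constraints N S K"
proof -
  have "(\<exists>k''\<in>{1..K}. j \<in> S k'' \<and> j' \<in> S k'') \<longleftrightarrow> k = k'"
    using assms is_partition_block_unique[OF assms(1)] by blast
  moreover have "j < N" "j' < N"
    using assms(4,5) is_partition_block_subset[OF assms(1,2)] is_partition_block_subset[OF assms(1,3)]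
    by auto
  ultimately show ?thesis
    using \<open>j \<noteq> j'\<close> unfolding all_constraints_def by auto
qed

theorem proposition1:
  fixes N K :: nat and S :: "nat \<Rightarrow> nat set" and \<omega> :: real
    and z :: "nat \<Rightarrow> 'a::euclidean_space"
  assumes part: "is_partition N S K"
    and omega: "\<omega> > 0"
    and nz: "\<forall>j<N. z j \<noteq> 0"
    and loss: "L_ang z (all_constraints N S K) \<omega> = 0"
    and k: "k \<in> {1..K}" and k': "k' \<in> {1..K}"
    and j: "j \<in> S k" and j': "j' \<in> S k'"
  shows "(k = k' \<longrightarrow> ang (z j) (z j') = 0) \<and> (k \<noteq> k' \<longrightarrow> ang (z j) (z j') \<ge> pi / \<omega>)"
proof (cases "j = j'")
  case True
  then have "k = k'" using is_partition_block_unique[OF part k k' j] j' by simp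
  moreover have "z j \<noteq> 0" using nz is_partition_block_subset[OF part k] j by auto
  ultimately show ?thesis using True by (simp add: ang_self)
next
  case False
  have "sim \<omega> (z j) (z j') (if k = k' then 1 else 0) = (if k = k' then 1 else 0)"
    using L_ang_eq_0_imp_sim_eq_label[OF finite_all_constraints all_constraints_label_le_1 loss
        all_constraints_memI[OF part k k' j j' False]]
    by simp
  then show ?thesis
    using sim_1_eq_1_imp_ang_eq_0 sim_0_eq_0_imp_ang_ge[OF omega] by (simp split: if_splits)
qed

end
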